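(* Let $n$ be a positive integer, $k\ge2$ an integer, and $\beta$ an integer with $0\le\beta\le k-1$. Then $$\det_{0\le i,j\le n-1}\bigl(C_{(k-1)i+j+\beta,k}+C_{(k-1)i+j+\beta+1,k}\bigr)=\sum_{s=0}^{n}\binom{\lfloor\frac{s+\beta}{k-1}\rfloor+n}{n-s}.$$
   Context: For integers $k\ge2$ and $m\ge0$, the generalised Catalan number is $$C_{m,k}=\frac{m-(k-1)\lfloor\frac{m}{k-1}\rfloor+1}{m+\lfloor\frac{m}{k-1}\rfloor+1}\binom{m+\lfloor\frac{m}{k-1}\rfloor+1}{m+1}.$$ *)

theory Defs
  imports "Jordan_Normal_Form.Determinant"
begin

definition gen_catalan :: "nat \<Rightarrow> nat \<Rightarrow> rat" where
  "gen_catalan m k =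
     (let q = m div (k - 1) in
      (of_nat (m - (k - 1) * q + 1) / of_nat (m + q + 1)) * of_nat ((m + q + 1) choose (m + 1)))"

end

theory Submission
  imports Defs
begin

text \<open>Write r = k - 1. By the ballot theorem, C_{m,k} counts the lattice paths from the origin to
  the highest point of column m that stay below the line r y = x. Cutting such paths at a column
  shows that the alternating binomial vectors
  x_m = ((-1)^s binom(\<lfloor>(s + \<beta>)/r\<rfloor> + m, m - s))_{s \<le> m}
  make the matrix (C_{r i + j + \<beta>, k})_{i,j} triangular with diagonal entries (-1)^m. Hence all
  its leading principal minors are 1, and x_n is a kernel vector of its first n rows. Replacing
  columns by sums of adjacent columns multiplies the determinant by the alternating sum of the
  entries of x_n, which is the right-hand side.\<close>

section \<open>Ballot paths\<close>

text \<open>lattice_paths r g u d counts the paths from (0, 0) to (u, d) with unit east and north steps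
  all of whose points (x, y) satisfy r y \<le> g + x.\<close>
fun lattice_paths :: "nat \<Rightarrow> nat \<Rightarrow> nat \<Rightarrow> nat \<Rightarrow> nat" where
  "lattice_paths r g 0 0 = 1"
| "lattice_paths r g (Suc u) 0 = lattice_paths r g u 0"
| "lattice_paths r g 0 (Suc d) = (if g < r * Suc d then 0 else lattice_paths r g 0 d)"
| "lattice_paths r g (Suc u) (Suc d) =
     (if g + Suc u < r * Suc d then 0
      else lattice_paths r g u (Suc d) + lattice_paths r g (Suc u) d)"

lemma lattice_paths_eq_0: "g + u < r * d \<Longrightarrow> lattice_paths r g u d = 0"
  by (cases u; cases d) auto

lemma lattice_paths_height_0 [simp]: "lattice_paths r g u 0 = 1"
  by (induction u) auto

lemma lattice_paths_width_0: "lattice_paths r g 0 d = of_bool (r * d \<le> g)"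
  by (induction d) auto

definition ballot_number :: "nat \<Rightarrow> nat \<Rightarrow> nat \<Rightarrow> int" where
  "ballot_number r u d =
     (if d = 0 then 1 else int ((u + d) choose d) - int r * int ((u + d) choose (d - 1)))"

lemma ballot_number_Suc_Suc:
  "ballot_number r u (Suc d) + ballot_number r (Suc u) d = ballot_number r (Suc u) (Suc d)"
proof (cases d)
  case (Suc d')
  have "(Suc u + Suc d choose d) = (u + Suc d choose d) + (Suc u + d choose d')"
    using Suc by simp
  then show ?thesis using Suc by (simp add: ballot_number_def algebra_simps)
qed (simp add: ballot_number_def)

lemma ballot_number_boundary:
  assumes "r * Suc d = Suc u"
  shows "ballot_number r u (Suc d) = 0"
proof -
  have "Suc d * ((u + Suc d) choose Suc d) = (u + Suc d) * ((u + d) choose d)"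
    using times_binomial_minus1_eq[of "Suc d" "u + Suc d"] by simp
  also have "\<dots> = (u + Suc d - d) * ((u + Suc d) choose d)"
    using binomial_absorb_comp[of "u + Suc d" d] by simp
  also have "u + Suc d - d = r * Suc d" using assms by simp
  finally have "Suc d * ((u + Suc d) choose Suc d) = Suc d * (r * ((u + Suc d) choose d))"
    by (simp only: ac_simps)
  then have "(u + Suc d) choose Suc d = r * ((u + Suc d) choose d)"
    by (simp only: mult_cancel1 nat.distinct simp_thms)
  then show ?thesis by (simp add: ballot_number_def)
qed

theorem lattice_paths_ballot:
  "r * d \<le> Suc u \<Longrightarrow> int (lattice_paths r 0 u d) = ballot_number r u d"
proof (induction u arbitrary: d)
  case 0
  then have "r * d = 0 \<or> r * d = 1" by linarith
  then have "of_bool (r * d = 0) = 1 - int (r * d)" by auto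
  then show ?case by (cases d) (simp_all add: ballot_number_def lattice_paths_width_0 algebra_simps)
next
  case (Suc u)
  have IH: "int (lattice_paths r 0 u d') = ballot_number r u d'" if "r * d' \<le> Suc u" for d'
    using Suc.IH that .
  from Suc.prems show ?case
  proof (induction d)
    case 0
    then show ?case by (simp add: ballot_number_def)
  next
    case (Suc d)
    show ?case
    proof (cases "Suc u < r * Suc d")
      case True
      then have "r * Suc d = Suc (Suc u)" using Suc.prems by linarith
      then show ?thesis using True by (simp add: ballot_number_boundary)
    next
      case False
      then show ?thesis
        using IH[of "Suc d"] Suc.IH Suc.prems
        by (simp flip: ballot_number_Suc_Suc)
    qed
  qed
qed

lemma ballot_number_closed_form:
  assumes "r * q \<le> n"
  shows "(of_int (ballot_number r n q) :: rat)
         = of_nat (n - r * q + 1) / of_nat (n + q + 1) * of_nat ((n + q + 1) choose q)"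
proof (cases q)
  case 0
  then show ?thesis by (simp add: ballot_number_def)
next
  case (Suc q')
  define x :: rat where "x = of_nat ((n + q) choose q)"
  define y :: rat where "y = of_nat ((n + q) choose q')"
  define b :: rat where "b = of_nat ((n + q + 1) choose q)"
  have "q * ((n + q) choose q) = (n + 1) * ((n + q) choose q')"
    using Suc_times_binomial_add[of q' n] Suc by (simp add: add.commute)
  from arg_cong[OF this, of "of_nat :: nat \<Rightarrow> rat"]
  have y: "y = of_nat q * x / (of_nat n + 1)"
    by (simp add: x_def y_def field_simps)
  have "(n + 1) * ((n + q + 1) choose q) = (n + q + 1) * ((n + q) choose q)"
    using binomial_absorb_comp[of "n + q + 1" q] by simp
  from arg_cong[OF this, of "of_nat :: nat \<Rightarrow> rat"]
  have b: "b = (of_nat n + of_nat q + 1) * x / (of_nat n + 1)"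
    by (simp add: x_def b_def field_simps)
  have nonzero: "(of_nat n + of_nat q + 1 :: rat) \<noteq> 0" "(of_nat n + 1 :: rat) \<noteq> 0"
    by (simp_all add: add_pos_nonneg pos_add_strict)
  have "(of_int (ballot_number r n q) :: rat) = x - of_nat r * y"
    by (simp add: ballot_number_def Suc x_def y_def)
  also have "\<dots> = (of_nat n - of_nat r * of_nat q + 1) * x / (of_nat n + 1)"
    using nonzero by (simp add: y field_simps)
  also have "\<dots> = (of_nat n - of_nat r * of_nat q + 1) / (of_nat n + of_nat q + 1) * b"
    using nonzero(1) unfolding b by simp
  also have "of_nat n - of_nat r * of_nat q + 1 = (of_nat (n - r * q + 1) :: rat)"
    using assms by simp
  finally show ?thesis by (simp add: b_def)
qed

lemma lattice_paths_Suc_eq_sum: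
  "lattice_paths r g (Suc u) D = of_bool (r * D \<le> g + Suc u) * (\<Sum>d = 0..D. lattice_paths r g u d)"
proof (induction D)
  case (Suc D)
  then show ?case
    using mult_le_mono2[of D "Suc D" r] by (auto simp: not_less)
qed simp

lemma lattice_paths_shift_width_0:
  assumes "r * d \<le> G" and "d \<le> D"
  shows "lattice_paths r (G - r * d) 0 (D - d) = of_bool (r * D \<le> G)"
proof -
  have "r * (D - d) = r * D - r * d" by (simp add: diff_mult_distrib2)
  moreover have "r * d \<le> r * D" using assms(2) by simp
  ultimately show ?thesis using assms(1) by (auto simp: lattice_paths_width_0)
qed

lemma lattice_paths_shift_eq_0:
  assumes "r * d \<le> G" and "G + t < r * D"
  shows "lattice_paths r (G - r * d) t (D - d) = 0"
proof -
  have "r * (D - d) = r * D - r * d" by (simp add: diff_mult_distrib2)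
  then show ?thesis using assms by (intro lattice_paths_eq_0) simp
qed

lemma lattice_paths_shift_Suc_Suc:
  assumes "r * d \<le> G" and "d \<le> D" and "r * Suc D \<le> G + Suc t"
  shows "lattice_paths r (G - r * d) (Suc t) (Suc D - d)
         = lattice_paths r (G - r * d) t (Suc D - d) + lattice_paths r (G - r * d) (Suc t) (D - d)"
proof -
  have "r * Suc (D - d) = r * Suc D - r * d"
    using assms(2) by (simp add: Suc_diff_le diff_mult_distrib2)
  moreover have "r * d \<le> r * Suc D" using assms(2) by (intro mult_le_mono2) simp
  ultimately have "\<not> G - r * d + Suc t < r * Suc (D - d)" using assms(1,3) by simp
  then show ?thesis using assms(2) by (simp add: Suc_diff_le)
qed

text \<open>Cut a path at its east step from column u to column Suc u, at height d say; the rest of the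
  path, seen from its new starting point (Suc u, d), stays below the line r y = Suc (g + u) - r d + x.\<close>
theorem lattice_paths_split:
  "lattice_paths r g (Suc u + t) D
   = (\<Sum>d = 0..D. lattice_paths r g u d * lattice_paths r (Suc (g + u) - r * d) t (D - d))"
proof (induction t arbitrary: D)
  case 0
  have "lattice_paths r g u d * lattice_paths r (Suc (g + u) - r * d) 0 (D - d)
        = of_bool (r * D \<le> Suc (g + u)) * lattice_paths r g u d" if "d \<le> D" for d
    using that lattice_paths_shift_width_0[of r d "Suc (g + u)" D]
    by (cases "r * d \<le> g + u") (simp_all add: lattice_paths_eq_0)
  then have "(\<Sum>d = 0..D. lattice_paths r g u d * lattice_paths r (Suc (g + u) - r * d) 0 (D - d))
      = (\<Sum>d = 0..D. of_bool (r * D \<le> Suc (g + u)) * lattice_paths r g u d)"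
    by (intro sum.cong) simp_all
  then show ?case by (simp add: lattice_paths_Suc_eq_sum sum_distrib_left)
next
  case (Suc t)
  have split_t: "lattice_paths r g (Suc u + t) D'
      = (\<Sum>d = 0..D'. lattice_paths r g u d * lattice_paths r (Suc (g + u) - r * d) t (D' - d))" for D'
    by (rule Suc.IH)
  show ?case
  proof (induction D)
    case (Suc D)
    let ?G = "Suc (g + u)"
    show ?case
    proof (cases "?G + Suc t < r * Suc D")
      case True
      then have "lattice_paths r g u d * lattice_paths r (?G - r * d) (Suc t) (Suc D - d) = 0" for d
        using lattice_paths_shift_eq_0[of r d ?G "Suc t" "Suc D"]
        by (cases "r * d \<le> g + u") (simp_all add: lattice_paths_eq_0)
      then show ?thesis using True by (simp add: lattice_paths_eq_0)
    next
      case False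
      have step: "lattice_paths r g u d * lattice_paths r (?G - r * d) (Suc t) (Suc D - d)
          = lattice_paths r g u d * lattice_paths r (?G - r * d) t (Suc D - d)
            + lattice_paths r g u d * lattice_paths r (?G - r * d) (Suc t) (D - d)" if "d \<le> D" for d
        using that False lattice_paths_shift_Suc_Suc[of r d ?G D t]
        by (cases "r * d \<le> g + u") (simp_all add: lattice_paths_eq_0 distrib_left)
      have "lattice_paths r g (Suc u + Suc t) (Suc D)
          = lattice_paths r g (Suc u + t) (Suc D) + lattice_paths r g (Suc u + Suc t) D"
        using False by simp
      also have "\<dots> = (\<Sum>d = 0..Suc D. lattice_paths r g u d * lattice_paths r (?G - r * d) t (Suc D - d))
          + (\<Sum>d = 0..D. lattice_paths r g u d * lattice_paths r (?G - r * d) (Suc t) (D - d))"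
        using Suc.IH split_t[of "Suc D"] by simp
      also have "\<dots> = (\<Sum>d = 0..Suc D. lattice_paths r g u d * lattice_paths r (?G - r * d) (Suc t) (Suc D - d))"
        by (simp add: step sum.distrib)
      finally show ?thesis .
    qed
  qed simp
qed

definition top_paths :: "nat \<Rightarrow> nat \<Rightarrow> nat \<Rightarrow> nat" where
  "top_paths r t g = lattice_paths r g t ((g + t) div r)"

lemma top_paths_0 [simp]: "top_paths r 0 g = 1"
  by (simp add: top_paths_def lattice_paths_width_0)

lemma gen_catalan_eq_top_paths:
  assumes "k \<ge> 2"
  shows "gen_catalan m k = of_nat (top_paths (k - 1) m 0)"
proof -
  define r where "r = k - 1"
  define q where "q = m div r"
  have rq: "r * q \<le> m" unfolding q_def by simp
  have "int (top_paths r m 0) = ballot_number r m q"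
    using lattice_paths_ballot[OF le_SucI[OF rq]] by (simp add: top_paths_def q_def)
  then have "of_nat (top_paths r m 0) = (of_int (ballot_number r m q) :: rat)"
    by (metis of_int_of_nat_eq)
  also have "\<dots> = of_nat (m - r * q + 1) / of_nat (m + q + 1) * of_nat ((m + q + 1) choose (m + 1))"
    using ballot_number_closed_form[OF rq] binomial_symmetric[of q "m + q + 1"] by simp
  finally show ?thesis
    unfolding gen_catalan_def Let_def r_def[symmetric] q_def[symmetric] by (rule sym)
qed

lemma diff_mult_div_eq:
  fixes x r d :: nat
  assumes "0 < r" and "r * d \<le> x"
  shows "(x - r * d) div r = x div r - d"
proof -
  have "x div r = (x - r * d + d * r) div r" using assms(2) by (simp add: mult.commute)
  also have "\<dots> = (x - r * d) div r + d" using assms(1) by simp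
  finally show ?thesis by simp
qed

lemma top_paths_Suc:
  assumes "0 < r"
  shows "top_paths r (Suc t) g = (\<Sum>d = 0..g div r. top_paths r t (Suc g - r * d))"
proof -
  define D where "D = (g + Suc t) div r"
  have summand: "lattice_paths r g 0 d * lattice_paths r (Suc g - r * d) t (D - d)
      = (if d \<le> g div r then top_paths r t (Suc g - r * d) else 0)" for d
  proof (cases "d \<le> g div r")
    case True
    then have rd: "r * d \<le> g" using assms by (simp add: less_eq_div_iff_mult_less_eq mult.commute)
    then have "(Suc g - r * d + t) div r = D - d"
      using diff_mult_div_eq[OF assms, of d "g + Suc t"] by (simp add: D_def)
    then show ?thesis using True rd by (simp add: top_paths_def lattice_paths_width_0)
  next
    case False
    then have "\<not> r * d \<le> g" using assms by (simp add: less_eq_div_iff_mult_less_eq mult.commute)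
    then show ?thesis using False by (simp add: lattice_paths_width_0)
  qed
  have "g div r \<le> D" unfolding D_def by (simp add: div_le_mono)
  then have range: "{0..D} \<inter> {d. d \<le> g div r} = {0..g div r}" by auto
  have "top_paths r (Suc t) g = lattice_paths r g (Suc 0 + t) D" by (simp add: top_paths_def D_def)
  also have "\<dots> = (\<Sum>d = 0..D. if d \<le> g div r then top_paths r t (Suc g - r * d) else 0)"
    using lattice_paths_split[of r g 0 t D] summand by simp
  also have "\<dots> = (\<Sum>d = 0..g div r. top_paths r t (Suc g - r * d))"
    by (simp add: sum.If_cases range)
  finally show ?thesis .
qed

lemma top_paths_Suc_rec:
  assumes "0 < r"
  shows "top_paths r (Suc t) g
         = top_paths r t (Suc g) + (if r \<le> g then top_paths r (Suc t) (g - r) else 0)"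
proof (cases "r \<le> g")
  case True
  define m where "m = (g - r) div r"
  have "0 < g div r" using True assms by (simp add: div_greater_zero_iff)
  then have gm: "g div r = Suc m"
    using True assms diff_mult_div_eq[of r 1 g] by (simp add: m_def)
  have "top_paths r (Suc t) g = (\<Sum>d = 0..Suc m. top_paths r t (Suc g - r * d))"
    using top_paths_Suc[OF assms] gm by simp
  also have "\<dots> = top_paths r t (Suc g) + (\<Sum>d = 0..m. top_paths r t (Suc g - r * Suc d))"
    unfolding sum.atLeast0_atMost_Suc_shift by simp
  also have "(\<Sum>d = 0..m. top_paths r t (Suc g - r * Suc d)) = (\<Sum>d = 0..m. top_paths r t (Suc (g - r) - r * d))"
    using True by (intro sum.cong) (simp_all add: Suc_diff_le)
  also have "\<dots> = top_paths r (Suc t) (g - r)"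
    using top_paths_Suc[OF assms, of t "g - r"] by (simp add: m_def)
  finally show ?thesis using True by simp
next
  case False
  then show ?thesis using top_paths_Suc[OF assms] by simp
qed

section \<open>An alternating binomial identity\<close>

text \<open>The parameters g and C generalise the sum enough to be evaluated by induction;
  alt_binomial_top_paths is the case g = r a and C = m - a.\<close>
definition alt_top_paths_sum :: "nat \<Rightarrow> nat \<Rightarrow> nat \<Rightarrow> int \<Rightarrow> rat" where
  "alt_top_paths_sum r g M C =
     (\<Sum>t = 0..M. (-1)^t * (of_int (int ((t + g) div r) + C) gchoose (M - t)) * of_nat (top_paths r t g))"

lemma alt_top_paths_sum_Suc:
  assumes r: "0 < r"
  shows "alt_top_paths_sum r g (Suc M) C
         = (of_int (int (g div r) + C) gchoose Suc M) - alt_top_paths_sum r (Suc g) M C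
           + (if r \<le> g then alt_top_paths_sum r (g - r) (Suc M) (C + 1) - (of_int (int (g div r) + C) gchoose Suc M)
              else 0)"
proof -
  define a where "a t = (-1::rat)^(Suc t) * (of_int (int ((Suc t + g) div r) + C) gchoose (M - t))" for t
  have "alt_top_paths_sum r g (Suc M) C
      = (of_int (int (g div r) + C) gchoose Suc M) + (\<Sum>t = 0..M. a t * of_nat (top_paths r (Suc t) g))"
    unfolding alt_top_paths_sum_def a_def sum.atLeast0_atMost_Suc_shift by simp
  also have "(\<Sum>t = 0..M. a t * of_nat (top_paths r (Suc t) g))
      = (\<Sum>t = 0..M. a t * of_nat (top_paths r t (Suc g)))
        + (\<Sum>t = 0..M. a t * of_nat (if r \<le> g then top_paths r (Suc t) (g - r) else 0))"
    by (simp add: top_paths_Suc_rec[OF r] sum.distrib[symmetric] distrib_left)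
  also have "(\<Sum>t = 0..M. a t * of_nat (top_paths r t (Suc g))) = - alt_top_paths_sum r (Suc g) M C"
    unfolding alt_top_paths_sum_def a_def by (simp add: sum_negf[symmetric])
  also have "(\<Sum>t = 0..M. a t * of_nat (if r \<le> g then top_paths r (Suc t) (g - r) else 0))
      = (if r \<le> g then alt_top_paths_sum r (g - r) (Suc M) (C + 1) - (of_int (int (g div r) + C) gchoose Suc M)
         else 0)"
  proof (cases "r \<le> g")
    case True
    have shift: "x div r = Suc ((x - r) div r)" if "r \<le> x" for x
      using that r diff_mult_div_eq[of r 1 x] by (simp add: div_greater_zero_iff)
    have "alt_top_paths_sum r (g - r) (Suc M) (C + 1)
        = (of_int (int (g div r) + C) gchoose Suc M) + (\<Sum>t = 0..M. a t * of_nat (top_paths r (Suc t) (g - r)))"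
      unfolding alt_top_paths_sum_def a_def sum.atLeast0_atMost_Suc_shift
      using True shift[of g] shift[of "Suc (t + g)" for t]
      by (simp add: algebra_simps)
    then show ?thesis using True by simp
  qed simp
  finally show ?thesis by simp
qed

theorem alt_top_paths_sum_eq:
  assumes r: "0 < r"
  shows "alt_top_paths_sum r g M C = (-1)^M * (of_int (int M - C) gchoose M)"
proof (induction M arbitrary: g C)
  case 0
  then show ?case by (simp add: alt_top_paths_sum_def)
next
  case (Suc M)
  show ?case
  proof (induction g arbitrary: C rule: less_induct)
    case (less g)
    have pascal: "(of_int (int (Suc M) - C) :: rat) gchoose Suc M
        = (of_int (int M - C) gchoose M) + (of_int (int M - C) gchoose Suc M)"
      using gbinomial_Suc_Suc[of "of_int (int M - C) :: rat" M] by (simp add: algebra_simps)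
    show ?case
    proof (cases "r \<le> g")
      case True
      have "alt_top_paths_sum r g (Suc M) C
          = - alt_top_paths_sum r (Suc g) M C + alt_top_paths_sum r (g - r) (Suc M) (C + 1)"
        using alt_top_paths_sum_Suc[OF r] True by simp
      also have "\<dots> = - ((-1)^M * (of_int (int M - C) gchoose M))
          + (-1)^(Suc M) * (of_int (int (Suc M) - (C + 1)) gchoose Suc M)"
        using Suc.IH less.IH[of "g - r" "C + 1"] True r by simp
      finally show ?thesis unfolding pascal by (simp add: algebra_simps)
    next
      case False
      have negated: "(of_int C :: rat) gchoose Suc M = (-1)^(Suc M) * (of_int (int M - C) gchoose Suc M)"
        using gbinomial_negated_upper[of "of_int C :: rat" "Suc M"] by (simp add: algebra_simps)
      have "alt_top_paths_sum r g (Suc M) C = (of_int C gchoose Suc M) - alt_top_paths_sum r (Suc g) M C"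
        using alt_top_paths_sum_Suc[OF r] False by simp
      also have "\<dots> = (of_int C gchoose Suc M) - ((-1)^M * (of_int (int M - C) gchoose M))"
        using Suc.IH by simp
      finally show ?thesis unfolding pascal negated by (simp add: algebra_simps)
    qed
  qed
qed

lemma alt_binomial_top_paths:
  assumes r: "0 < r" and \<beta>: "\<beta> \<le> r"
  shows "(\<Sum>s = 0..m. (-1)^s * of_nat (((s + \<beta>) div r + m) choose (m - s)) * of_nat (top_paths r (s + \<beta>) (r * a)))
         = (-1)^m * (of_nat ((a + \<beta>) choose (m + \<beta>)) :: rat)"
proof -
  define f where "f t = (-1)^t * ((of_int (int ((t + r * a) div r) + (int m - int a)) :: rat) gchoose (m + \<beta> - t))
      * of_nat (top_paths r t (r * a))" for t
  have "alt_top_paths_sum r (r * a) (m + \<beta>) (int m - int a) = sum f {0..m + \<beta>}"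
    by (simp add: alt_top_paths_sum_def f_def)
  also have "\<dots> = sum f {0..<\<beta>} + sum f {\<beta>..m + \<beta>}"
    by (subst sum.union_disjoint[symmetric]) (auto intro: sum.cong)
  also have "sum f {0..<\<beta>} = 0"
  proof (rule sum.neutral, rule ballI)
    fix t assume t: "t \<in> {0..<\<beta>}"
    then have "(t + r * a) div r = a" using r \<beta> by simp
    moreover have "m choose (m + \<beta> - t) = 0" using t by simp
    ultimately show "f t = 0" by (simp add: f_def binomial_gbinomial[symmetric])
  qed
  also have "sum f {\<beta>..m + \<beta>} = (\<Sum>s = 0..m. f (s + \<beta>))"
    using sum.shift_bounds_cl_nat_ivl[of f 0 \<beta> m] by simp
  also have "(\<Sum>s = 0..m. f (s + \<beta>)) = (-1)^\<beta> * (\<Sum>s = 0..m. (-1)^s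
      * of_nat (((s + \<beta>) div r + m) choose (m - s)) * of_nat (top_paths r (s + \<beta>) (r * a)))"
  proof -
    have "(s + \<beta> + r * a) div r = (s + \<beta>) div r + a" for s using r by simp
    then show ?thesis by (simp add: f_def binomial_gbinomial power_add sum_distrib_left mult_ac)
  qed
  finally have "alt_top_paths_sum r (r * a) (m + \<beta>) (int m - int a)
      = (-1)^\<beta> * (\<Sum>s = 0..m. (-1)^s * of_nat (((s + \<beta>) div r + m) choose (m - s))
          * of_nat (top_paths r (s + \<beta>) (r * a)))"
    by simp
  moreover have "alt_top_paths_sum r (r * a) (m + \<beta>) (int m - int a)
      = (-1)^\<beta> * ((-1)^m * of_nat ((a + \<beta>) choose (m + \<beta>)))"
    by (simp add: alt_top_paths_sum_eq[OF r] binomial_gbinomial power_add add.commute)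
  ultimately show ?thesis by simp
qed

section \<open>Triangularity of the Catalan matrix\<close>

definition prefix_paths :: "nat \<Rightarrow> nat \<Rightarrow> nat \<Rightarrow> nat" where
  "prefix_paths r i a = (if i = 0 then of_bool (a = 0) else lattice_paths r 0 (r * i - 1) (i - a))"

lemma prefix_paths_diag [simp]: "prefix_paths r i i = 1"
  by (simp add: prefix_paths_def)

text \<open>Split at column r i - 1: the prefix ends at height i - a, after which the path starts again
  at distance r a from the boundary.\<close>
lemma top_paths_prefix_decomposition:
  assumes r: "0 < r"
  shows "top_paths r (r * i + t) 0 = (\<Sum>a = 0..i. prefix_paths r i a * top_paths r t (r * a))"
proof (cases "i = 0")
  case True
  then show ?thesis by (simp add: prefix_paths_def)
next
  case False
  define D where "D = i + t div r"
  have D: "(r * i + t) div r = D" using r by (simp add: D_def)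
  have summand: "lattice_paths r 0 (r * i - 1) d * lattice_paths r (Suc (r * i - 1) - r * d) t (D - d)
      = (if d \<le> i then prefix_paths r i (i - d) * top_paths r t (r * (i - d)) else 0)" for d
  proof (cases "d \<le> i")
    case True
    have "Suc (r * i - 1) - r * d = r * (i - d)" using False r by (simp add: diff_mult_distrib2)
    moreover have "D - d = (r * (i - d) + t) div r" using True r by (simp add: D_def)
    ultimately show ?thesis using True False by (simp add: prefix_paths_def top_paths_def)
  next
    case False
    then have "r * Suc i \<le> r * d" by (intro mult_le_mono2) simp
    then show ?thesis using False r by (simp add: lattice_paths_eq_0)
  qed
  have "i \<le> D" by (simp add: D_def)
  then have range: "{0..D} \<inter> {d. d \<le> i} = {0..i}" by auto
  have "top_paths r (r * i + t) 0 = lattice_paths r 0 (Suc (r * i - 1) + t) D"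
    using False r by (simp add: top_paths_def D)
  also have "\<dots> = (\<Sum>d = 0..D. if d \<le> i then prefix_paths r i (i - d) * top_paths r t (r * (i - d)) else 0)"
    unfolding lattice_paths_split add_0 summand ..
  also have "\<dots> = (\<Sum>d = 0..i. prefix_paths r i (i - d) * top_paths r t (r * (i - d)))"
    by (simp add: sum.If_cases range)
  also have "\<dots> = (\<Sum>a = 0..i. prefix_paths r i a * top_paths r t (r * a))"
    using sum.atLeastAtMost_rev[of "\<lambda>a. prefix_paths r i a * top_paths r t (r * a)" 0 i] by simp
  finally show ?thesis .
qed

theorem alt_binomial_top_paths_eq_delta:
  assumes r: "0 < r" and \<beta>: "\<beta> \<le> r" and "i \<le> m"
  shows "(\<Sum>s = 0..m. (-1)^s * of_nat (((s + \<beta>) div r + m) choose (m - s)) * of_nat (top_paths r (r * i + s + \<beta>) 0))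
         = (if i = m then (-1)^m else (0 :: rat))"
proof -
  define x :: "nat \<Rightarrow> rat" where "x s = (-1)^s * of_nat (((s + \<beta>) div r + m) choose (m - s))" for s
  have "(\<Sum>s = 0..m. x s * of_nat (top_paths r (r * i + s + \<beta>) 0))
      = (\<Sum>s = 0..m. x s * (\<Sum>a = 0..i. of_nat (prefix_paths r i a) * of_nat (top_paths r (s + \<beta>) (r * a))))"
    by (simp add: top_paths_prefix_decomposition[OF r] add.assoc)
  also have "\<dots> = (\<Sum>a = 0..i. of_nat (prefix_paths r i a) * (\<Sum>s = 0..m. x s * of_nat (top_paths r (s + \<beta>) (r * a))))"
    by (simp add: sum_distrib_left mult_ac sum.swap[of _ "{0..i}"])
  also have "\<dots> = (\<Sum>a = 0..i. of_nat (prefix_paths r i a) * ((-1)^m * of_nat ((a + \<beta>) choose (m + \<beta>))))"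
    using alt_binomial_top_paths[OF r \<beta>] by (simp add: x_def)
  also have "\<dots> = (\<Sum>a = 0..i. if a = m then (-1)^m else 0)"
    using \<open>i \<le> m\<close> by (intro sum.cong) auto
  also have "\<dots> = (if i = m then (-1)^m else 0)"
    using \<open>i \<le> m\<close> by simp
  finally show ?thesis by (simp add: x_def)
qed

section \<open>Determinants\<close>

text \<open>Multiplying by the identity matrix with last column x turns the last column into x n times
  the last unit vector.\<close>
lemma det_mat_Suc_eq_det_mat:
  fixes c :: "nat \<Rightarrow> nat \<Rightarrow> 'a :: idom" and x :: "nat \<Rightarrow> 'a"
  assumes comb: "\<And>i. i \<le> n \<Longrightarrow> (\<Sum>s = 0..n. x s * c i s) = (if i = n then x n else 0)"
    and xn: "x n \<noteq> 0"
  shows "det (mat (Suc n) (Suc n) (\<lambda>(i, j). c i j)) = det (mat n n (\<lambda>(i, j). c i j))"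
proof -
  define A where "A = mat (Suc n) (Suc n) (\<lambda>(i, j). c i j)"
  define X where "X = mat (Suc n) (Suc n) (\<lambda>(l, j). if j = n then x l else of_bool (l = j) :: 'a)"
  define M where "M = mat (Suc n) (Suc n) (\<lambda>(i, j). if j = n then of_bool (i = n) * x n else c i j)"
  have A: "A \<in> carrier_mat (Suc n) (Suc n)" and X: "X \<in> carrier_mat (Suc n) (Suc n)"
    and M: "M \<in> carrier_mat (Suc n) (Suc n)" unfolding A_def X_def M_def by auto
  have "det X = (\<Prod>i = 0..<Suc n. X $$ (i, i))"
    by (subst det_upper_triangular[OF _ X]) (auto simp: X_def prod_list_diag_prod)
  also have "\<dots> = x n" by (simp add: X_def)
  finally have det_X: "det X = x n" .
  have "A * X = M"
  proof (rule eq_matI)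
    fix i j assume "i < dim_row M" "j < dim_col M"
    then have i: "i \<le> n" and j: "j \<le> n" by (auto simp: M_def)
    have "(A * X) $$ (i, j) = (\<Sum>l = 0..n. c i l * X $$ (l, j))"
      using i j by (simp add: A_def X_def scalar_prod_def atLeastLessThanSuc_atLeastAtMost)
    also have "\<dots> = M $$ (i, j)"
    proof (cases "j = n")
      case True
      then show ?thesis using comb[OF i] i by (simp add: X_def M_def mult.commute)
    next
      case False
      have "(\<Sum>l = 0..n. c i l * X $$ (l, j)) = (\<Sum>l = 0..n. if l = j then c i l else 0)"
        using False j by (intro sum.cong) (auto simp: X_def)
      then show ?thesis using False i j by (simp add: M_def)
    qed
    finally show "(A * X) $$ (i, j) = M $$ (i, j)" .
  qed (auto simp: A_def X_def M_def)
  then have "det A * x n = det M" using det_mult[OF A X] det_X by simp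
  also have "det M = (\<Sum>i<Suc n. M $$ (i, n) * cofactor M i n)"
    by (rule laplace_expansion_column[OF M]) simp
  also have "\<dots> = x n * cofactor M n n" by (simp add: M_def)
  also have "mat_delete M n n = mat n n (\<lambda>(i, j). c i j)"
    by (rule eq_matI) (auto simp: mat_delete_def M_def)
  then have "cofactor M n n = det (mat n n (\<lambda>(i, j). c i j))"
    by (simp add: cofactor_def)
  finally show ?thesis using xn by (simp add: A_def mult.commute)
qed

lemma det_bidiagonal_plus_last_column:
  fixes y :: "nat \<Rightarrow> 'a :: comm_ring_1"
  shows "det (mat (Suc m) (Suc m) (\<lambda>(l, j). of_bool (l = j) + of_bool (l = Suc j) + of_bool (j = m) * y l))
         = 1 + (\<Sum>p = 0..m. (-1)^(m - p) * y p)"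
proof -
  define n where "n = Suc m"
  define G where "G = mat n n (\<lambda>(l, j). of_bool (l = j) + of_bool (l = Suc j) + of_bool (j = m) * y l)"
  define L where "L = mat n n (\<lambda>(l, p). of_bool (p \<le> l) * (-1 :: 'a)^(l - p))"
  have G: "G \<in> carrier_mat n n" and L: "L \<in> carrier_mat n n" unfolding G_def L_def by auto
  have "det L = (\<Prod>i = 0..<n. L $$ (i, i))"
    by (subst det_lower_triangular[OF _ L]) (auto simp: L_def prod_list_diag_prod)
  then have det_L: "det L = 1" by (simp add: L_def)
  \<comment> \<open>Multiplying by the alternating matrix L telescopes the bidiagonal part of G to the identity.\<close>
  have LG: "(L * G) $$ (l, j) = of_bool (l = j) + of_bool (j = m) * (\<Sum>p = 0..l. (-1)^(l - p) * y p)"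
    if l: "l < n" and j: "j < n" for l j
  proof -
    have "(L * G) $$ (l, j) = (\<Sum>p \<in> {0..<n}. L $$ (l, p) * G $$ (p, j))"
      using l j by (simp add: L_def G_def scalar_prod_def)
    also have "\<dots> = (\<Sum>p \<in> {0..<n}. (if p = j then of_bool (j \<le> l) * (-1)^(l - j) else 0)
        + (if p = Suc j then of_bool (Suc j \<le> l) * (-1)^(l - Suc j) else 0)
        + of_bool (j = m) * (if p \<le> l then (-1)^(l - p) * y p else 0))"
      using l j by (intro sum.cong) (auto simp: L_def G_def algebra_simps)
    also have "\<dots> = of_bool (j \<le> l) * (-1)^(l - j) + of_bool (Suc j \<le> l) * (-1)^(l - Suc j)
        + of_bool (j = m) * (\<Sum>p = 0..l. (-1)^(l - p) * y p)"
    proof -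
      have "{0..<n} \<inter> {p. p \<le> l} = {0..l}" using l by auto
      then show ?thesis using l j
        by (simp add: sum.distrib sum_distrib_left sum.If_cases del: of_bool_eq)
    qed
    also have "of_bool (j \<le> l) * (-1)^(l - j) + of_bool (Suc j \<le> l) * (-1)^(l - Suc j) = (of_bool (l = j) :: 'a)"
    proof (cases "j < l")
      case True
      then have "l - j = Suc (l - Suc j)" by simp
      then show ?thesis using True by simp
    qed auto
    finally show ?thesis .
  qed
  have "upper_triangular (L * G)"
    unfolding upper_triangular_def
  proof (intro allI impI)
    fix i j assume "i < dim_row (L * G)" "j < i"
    then show "(L * G) $$ (i, j) = 0" using L by (subst LG) (auto simp: n_def)
  qed
  then have "det (L * G) = (\<Prod>i = 0..<n. (L * G) $$ (i, i))"
    using L G by (subst det_upper_triangular[of _ n]) (auto simp: prod_list_diag_prod)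
  also have "\<dots> = 1 + (\<Sum>p = 0..m. (-1)^(m - p) * y p)"
    by (simp add: n_def LG prod.atLeast0_lessThan_Suc)
  finally show ?thesis using det_mult[OF L G] det_L by (simp add: G_def n_def)
qed

text \<open>The kernel relation expresses column n through the columns 0, ..., n - 1, so the matrix of
  adjacent column sums is (c i j) times the matrix of det_bidiagonal_plus_last_column.\<close>
lemma det_adjacent_column_sums:
  fixes c :: "nat \<Rightarrow> nat \<Rightarrow> 'a :: comm_ring_1" and b :: "nat \<Rightarrow> 'a"
  assumes kernel: "\<And>i. i < n \<Longrightarrow> (\<Sum>s = 0..n. (-1)^s * b s * c i s) = 0"
    and bn: "b n = 1"
  shows "det (mat n n (\<lambda>(i, j). c i j + c i (Suc j)))
         = det (mat n n (\<lambda>(i, j). c i j)) * (\<Sum>s = 0..n. b s)"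
proof (cases n)
  case 0
  then show ?thesis using bn by simp
next
  case (Suc m)
  define y where "y l = (-1)^(m + l) * b l" for l
  define A where "A = mat n n (\<lambda>(i, j). c i j)"
  define G where "G = mat n n (\<lambda>(l, j). of_bool (l = j) + of_bool (l = Suc j) + of_bool (j = m) * y l)"
  have A: "A \<in> carrier_mat n n" and G: "G \<in> carrier_mat n n" unfolding A_def G_def by auto
  have last_column: "c i n = (\<Sum>l = 0..m. c i l * y l)" if i: "i < n" for i
  proof -
    have "(\<Sum>s = 0..m. (-1)^s * b s * c i s) + (-1)^n * c i n = 0"
      using kernel[OF i] bn Suc by simp
    then have "(-1)^m * ((\<Sum>s = 0..m. (-1)^s * b s * c i s) + (-1)^n * c i n) = 0" by simp
    then show ?thesis
      using Suc by (simp add: y_def algebra_simps power_add sum_distrib_left)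
  qed
  have "mat n n (\<lambda>(i, j). c i j + c i (Suc j)) = A * G"
  proof (rule eq_matI)
    fix i j assume "i < dim_row (A * G)" "j < dim_col (A * G)"
    then have i: "i < n" and j: "j < n" by (auto simp: A_def G_def)
    have "(A * G) $$ (i, j) = (\<Sum>l \<in> {0..<n}. c i l * G $$ (l, j))"
      using i j by (simp add: A_def G_def scalar_prod_def)
    also have "\<dots> = (\<Sum>l \<in> {0..<n}. (if l = j then c i l else 0) + (if l = Suc j then c i l else 0)
        + of_bool (j = m) * (c i l * y l))"
      using j by (intro sum.cong) (auto simp: G_def algebra_simps)
    also have "\<dots> = c i j + c i (Suc j)"
      using i j last_column[OF i] Suc
      by (cases "j = m") (auto simp: sum.distrib sum_distrib_left atLeastLessThanSuc_atLeastAtMost)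
    finally show "mat n n (\<lambda>(i, j). c i j + c i (Suc j)) $$ (i, j) = (A * G) $$ (i, j)"
      using i j by simp
  qed (auto simp: A_def G_def)
  moreover have "det G = (\<Sum>s = 0..n. b s)"
  proof -
    have "(-1)^(m - p) * y p = b p" if "p \<le> m" for p
    proof -
      have "(-1 :: 'a)^(m - p) * (-1)^(m + p) = (-1)^(2 * m)"
        using that by (simp add: power_add[symmetric])
      then show ?thesis by (simp add: y_def power_mult mult.assoc[symmetric])
    qed
    then have "det G = 1 + (\<Sum>p = 0..m. b p)"
      unfolding G_def Suc by (simp add: det_bidiagonal_plus_last_column)
    then show ?thesis using bn Suc by simp
  qed
  ultimately show ?thesis using det_mult[OF A G] by (simp add: A_def)
qed

theorem theorem9:
  fixes n k \<beta> :: nat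
  assumes "n \<ge> 1" and "k \<ge> 2" and "\<beta> \<le> k - 1"
  shows "det (mat n n (\<lambda>(i, j). gen_catalan ((k - 1) * i + j + \<beta>) k
                                 + gen_catalan ((k - 1) * i + j + \<beta> + 1) k))
         = of_nat (\<Sum>s = 0..n. ((s + \<beta>) div (k - 1) + n) choose (n - s))"
proof -
  define r where "r = k - 1"
  have r: "0 < r" and \<beta>: "\<beta> \<le> r" using assms(2,3) by (simp_all add: r_def)
  define c :: "nat \<Rightarrow> nat \<Rightarrow> rat" where "c i j = of_nat (top_paths r (r * i + j + \<beta>) 0)" for i j
  define x :: "nat \<Rightarrow> nat \<Rightarrow> rat"
    where "x m s = (-1)^s * of_nat (((s + \<beta>) div r + m) choose (m - s))" for m s
  have delta: "(\<Sum>s = 0..m. x m s * c i s) = (if i = m then (-1)^m else 0)" if "i \<le> m" for i m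
    using alt_binomial_top_paths_eq_delta[OF r \<beta> that] by (simp add: x_def c_def)
  have unimodular: "det (mat m m (\<lambda>(i, j). c i j)) = 1" for m
  proof (induction m)
    case (Suc m)
    then show ?case using det_mat_Suc_eq_det_mat[of m "x m" c] delta by (simp add: x_def)
  qed simp
  have main: "det (mat n n (\<lambda>(i, j). c i j + c i (Suc j)))
      = (\<Sum>s = 0..n. of_nat (((s + \<beta>) div r + n) choose (n - s)))"
    using det_adjacent_column_sums[of n "\<lambda>s. of_nat (((s + \<beta>) div r + n) choose (n - s))" c]
      delta[of _ n] unimodular by (simp add: x_def mult.assoc)
  have entry: "gen_catalan (r * i + j + \<beta>) k = c i j" for i j
    using gen_catalan_eq_top_paths[OF assms(2)] by (simp add: c_def r_def)
  have entry_Suc: "gen_catalan (r * i + j + \<beta> + 1) k = c i (Suc j)" for i j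
    using entry[of i "Suc j"] by simp
  show ?thesis unfolding r_def[symmetric] entry entry_Suc main by simp
qed

end
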